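(* Let $D\in\mathbb{N}$, $r\in\{1,\dots,D\}$ and $p\in(0,1)$. For $\alpha>0$ let $Y_\alpha\sim\mathrm{NB}_{\alpha,p}^{(r,D)}$, and let $U\sim\mathcal{N}_{0,1}^{(r,D)}$. Then $$\lim_{\alpha\to\infty}\mathbb{D}[Y_\alpha]=\frac{1}{p}\operatorname{Var}(U).$$
   Context: $\mathrm{NB}_{\alpha,p}$ denotes the negative binomial distribution on $\mathbb{N}_0$ with pmf $\frac{\Gamma(y+\alpha)}{y!\,\Gamma(\alpha)}p^{\alpha}(1-p)^{y}$. It has mean $\alpha(1-p)/p$, variance $\alpha(1-p)/p^2$, and index of dispersion $1/p$. $\mathrm{NB}_{\alpha,p}^{(r,D)}$ is the law of the $r$-th smallest of $D$ i.i.d. $\mathrm{NB}_{\alpha,p}$ variables, and $\mathcal{N}_{0,1}^{(r,D)}$ is the law of the $r$-th smallest of $D$ i.i.d. standard normal variables. For a nonnegative random variable $Y$ with positive finite mean, the index of dispersion is $\mathbb{D}[Y]=\operatorname{Var}(Y)/\mathbb{E}[Y]$. *)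

theory Defs
  imports "HOL-Probability.Probability"
begin

definition nb_pmf :: "real \<Rightarrow> real \<Rightarrow> nat \<Rightarrow> real" where
  "nb_pmf \<alpha> p y = Gamma (real y + \<alpha>) / (fact y * Gamma \<alpha>) * p powr \<alpha> * (1 - p) ^ y"

definition NB :: "real \<Rightarrow> real \<Rightarrow> real measure" where
  "NB \<alpha> p = distr (density (count_space UNIV) (\<lambda>y::nat. ennreal (nb_pmf \<alpha> p y))) borel real"

definition std_normal :: "real measure" where
  "std_normal = density lborel std_normal_density"

text \<open>The r-th smallest entry (r counted from 1) of the vector (x 0, ..., x (D-1)).\<close>
definition rth_smallest :: "nat \<Rightarrow> nat \<Rightarrow> (nat \<Rightarrow> real) \<Rightarrow> real" where
  "rth_smallest D r x = sort (map x [0..<D]) ! (r - 1)"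

definition order_stat_law :: "nat \<Rightarrow> nat \<Rightarrow> real measure \<Rightarrow> real measure" where
  "order_stat_law D r M = distr (PiM {..<D} (\<lambda>_. M)) borel (rth_smallest D r)"

definition mean_of :: "real measure \<Rightarrow> real" where
  "mean_of N = (\<integral>x. x \<partial>N)"

definition var_of :: "real measure \<Rightarrow> real" where
  "var_of N = (\<integral>x. (x - mean_of N)\<^sup>2 \<partial>N)"

definition dispersion :: "real measure \<Rightarrow> real" where
  "dispersion N = var_of N / mean_of N"

end

(* The negative binomial law NB(a,p) has mean m = a(1-p)/p and standard deviation
   s = sqrt(a(1-p))/p.  Its standardisation Z_a = (Y - m)/s is asymptotically standard
   normal: the characteristic function of Z_a is exp(a R(t/s) - t^2/2), where the remainder
   R of the second-order cumulant expansion is O(|t/s|^3), and a |t/s|^3 -> 0.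
   By Skorohod's theorem this weak convergence is realised pointwise on a common probability
   space.  The r-th smallest of D values is a 1-Lipschitz function of them and is dominated by
   sum_i (1 + x_i^2), whose integral converges; so Pratt's lemma gives convergence of the
   mean E_a and variance V_a of the r-th order statistic of Z_a to those of the normal one.
   Since the order statistic commutes with the increasing map z -> m + s z, the order
   statistic of NB(a,p) has dispersion s^2 V_a / (m + s E_a) = (V_a / p) / (1 + E_a / sqrt(a(1-p))),
   which tends to Var(U) / p. *)

theory Submission
  imports Defs "HOL-Real_Asymp.Real_Asymp"
begin

section \<open>Order statistics\<close>

lemma sorted_nth_le_iff_card:
  fixes s :: "'a::linorder list"
  assumes "sorted s" "k < length s"
  shows "s ! k \<le> c \<longleftrightarrow> k < card {i. i < length s \<and> s ! i \<le> c}"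
proof
  assume "s ! k \<le> c"
  then have "{..k} \<subseteq> {i. i < length s \<and> s ! i \<le> c}"
    using assms sorted_nth_mono[OF assms(1)] by (fastforce intro: order.trans)
  from card_mono[OF _ this] show "k < card {i. i < length s \<and> s ! i \<le> c}"
    by (simp only: finite_Collect_conjI finite_Collect_less_nat card_atMost Suc_le_eq simp_thms)
next
  assume "k < card {i. i < length s \<and> s ! i \<le> c}"
  moreover have "{i. i < length s \<and> s ! i \<le> c} \<subseteq> {..<k}" if "c < s ! k"
  proof
    fix i assume i: "i \<in> {i. i < length s \<and> s ! i \<le> c}"
    show "i \<in> {..<k}"
    proof (rule ccontr)
      assume "i \<notin> {..<k}"
      then have "s ! k \<le> s ! i"
        using i sorted_nth_mono[OF assms(1), of k i] by simp
      then show False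
        using i that by (simp add: leD order.trans)
    qed
  qed
  ultimately show "s ! k \<le> c"
    using card_mono[of "{..<k}" "{i. i < length s \<and> s ! i \<le> c}"] by force
qed

lemma rth_smallest_le_iff:
  assumes "1 \<le> r" "r \<le> D"
  shows "rth_smallest D r x \<le> c \<longleftrightarrow> r \<le> card {i. i < D \<and> x i \<le> c}"
proof -
  let ?s = "sort (map x [0..<D])"
  have "card {i. i < length ?s \<and> ?s ! i \<le> c} = length (filter (\<lambda>a. a \<le> c) ?s)"
    by (simp add: length_filter_conv_card)
  also have "\<dots> = length (filter (\<lambda>a. a \<le> c) (map x [0..<D]))"
    by (simp add: filter_sort)
  also have "\<dots> = card {i. i < D \<and> x i \<le> c}"
    by (auto simp: length_filter_conv_card intro!: arg_cong[where f=card])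
  finally show ?thesis
    using assms sorted_nth_le_iff_card[of ?s "r - 1" c] by (simp add: rth_smallest_def) arith
qed

lemma rth_smallest_mem:
  assumes "1 \<le> r" "r \<le> D"
  obtains j where "j < D" "rth_smallest D r x = x j"
proof -
  have "rth_smallest D r x \<in> set (sort (map x [0..<D]))"
    unfolding rth_smallest_def using assms by (intro nth_mem) simp
  then show ?thesis using that by auto
qed

lemma rth_smallest_cong:
  assumes "\<And>i. i < D \<Longrightarrow> x i = y i"
  shows "rth_smallest D r x = rth_smallest D r y"
proof -
  have "map x [0..<D] = map y [0..<D]"
    using assms by simp
  then show ?thesis
    by (simp only: rth_smallest_def)
qed

lemma rth_smallest_lipschitz:
  assumes "1 \<le> r" "r \<le> D" "\<And>i. i < D \<Longrightarrow> \<bar>x i - y i\<bar> \<le> e"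
  shows "\<bar>rth_smallest D r x - rth_smallest D r y\<bar> \<le> e"
proof -
  have le: "rth_smallest D r y \<le> rth_smallest D r x + e"
    if "\<And>i. i < D \<Longrightarrow> \<bar>x i - y i\<bar> \<le> e" for x y
  proof -
    let ?c = "rth_smallest D r x"
    have "{i. i < D \<and> x i \<le> ?c} \<subseteq> {i. i < D \<and> y i \<le> ?c + e}"
      using that by (force simp: abs_le_iff)
    then have "card {i. i < D \<and> x i \<le> ?c} \<le> card {i. i < D \<and> y i \<le> ?c + e}"
      by (intro card_mono) auto
    then show ?thesis
      using rth_smallest_le_iff[OF assms(1,2), of x ?c] rth_smallest_le_iff[OF assms(1,2), of y]
      by simp
  qed
  show ?thesis
    using le[OF assms(3)] le[of y x] assms(3) by (force simp: abs_minus_commute)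
qed

lemma rth_smallest_tendsto:
  assumes "1 \<le> r" "r \<le> D" "\<And>i. i < D \<Longrightarrow> ((\<lambda>n. X n i) \<longlongrightarrow> x i) F"
  shows "((\<lambda>n. rth_smallest D r (X n)) \<longlongrightarrow> rth_smallest D r x) F"
proof (rule LIM_zero_cancel, rule Lim_null_comparison)
  show "\<forall>\<^sub>F n in F. norm (rth_smallest D r (X n) - rth_smallest D r x) \<le> (\<Sum>i<D. \<bar>X n i - x i\<bar>)"
  proof (intro always_eventually allI)
    fix n
    have "\<bar>rth_smallest D r (X n) - rth_smallest D r x\<bar> \<le> (\<Sum>i<D. \<bar>X n i - x i\<bar>)"
      by (rule rth_smallest_lipschitz[OF assms(1,2)]) (auto intro: member_le_sum)
    then show "norm (rth_smallest D r (X n) - rth_smallest D r x) \<le> (\<Sum>i<D. \<bar>X n i - x i\<bar>)"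
      by simp
  qed
  show "((\<lambda>n. \<Sum>i<D. \<bar>X n i - x i\<bar>) \<longlongrightarrow> 0) F"
    using tendsto_rabs_zero[OF LIM_zero[OF assms(3)]] by (intro tendsto_null_sum) simp
qed

lemma rth_smallest_strict_mono:
  assumes "1 \<le> r" "r \<le> D" "strict_mono (f :: real \<Rightarrow> real)"
  shows "rth_smallest D r (\<lambda>i. f (x i)) = f (rth_smallest D r x)"
proof -
  have card_f: "card {i. i < D \<and> f (x i) \<le> f c} = card {i. i < D \<and> x i \<le> c}" for c
    using assms(3) by (simp add: strict_mono_less_eq)
  have le_iff: "rth_smallest D r (\<lambda>i. f (x i)) \<le> f c \<longleftrightarrow> rth_smallest D r x \<le> c" for c
    using assms(1,2) by (simp add: rth_smallest_le_iff card_f)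
  obtain j where j: "rth_smallest D r (\<lambda>i. f (x i)) = f (x j)"
    using rth_smallest_mem[OF assms(1,2)] by blast
  have "rth_smallest D r (\<lambda>i. f (x i)) \<le> f (rth_smallest D r x)"
    by (simp add: le_iff)
  moreover have "rth_smallest D r x \<le> x j"
    using le_iff[of "x j"] j by simp
  then have "f (rth_smallest D r x) \<le> rth_smallest D r (\<lambda>i. f (x i))"
    using j assms(3) by (simp add: strict_mono_less_eq)
  ultimately show ?thesis
    by (rule order_antisym)
qed

lemma measurable_rth_smallest [measurable]:
  assumes "1 \<le> r" "r \<le> D"
  shows "rth_smallest D r \<in> borel_measurable (PiM {..<D} (\<lambda>_. borel))"
proof (rule borel_measurableI_le)
  fix c
  have card_eq_sum: "real (card {i. i < D \<and> w i \<le> c}) = (\<Sum>i<D. indicator {..c} (w i))"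
    for w :: "nat \<Rightarrow> real"
    by (subst sum.mono_neutral_cong_right[of "{..<D}" "{i. i < D \<and> w i \<le> c}" _ "\<lambda>_. 1"])
       (auto simp: indicator_def)
  have "{w \<in> space (PiM {..<D} (\<lambda>_. borel)). rth_smallest D r w \<le> c}
      = {w \<in> space (PiM {..<D} (\<lambda>_. borel)). real r \<le> (\<Sum>i<D. indicator {..c} (w i))}"
    using assms by (simp only: rth_smallest_le_iff card_eq_sum[symmetric] of_nat_le_iff)
  also have "\<dots> \<in> sets (PiM {..<D} (\<lambda>_. borel))"
    by measurable
  finally show "{w \<in> space (PiM {..<D} (\<lambda>_. borel)). rth_smallest D r w \<le> c} \<in> sets (PiM {..<D} (\<lambda>_. borel))" .
qed

lemma measurable_rth_smallest_components [measurable]: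
  assumes "1 \<le> r" "r \<le> D" "h \<in> borel_measurable M"
  shows "(\<lambda>\<omega>. rth_smallest D r (\<lambda>i. h (\<omega> i))) \<in> borel_measurable (PiM {..<D} (\<lambda>_. M))"
proof -
  have "compose {..<D} h \<in> measurable (PiM {..<D} (\<lambda>_. M)) (PiM {..<D} (\<lambda>_. borel))"
    using assms(3) unfolding compose_def by measurable
  from measurable_compose[OF this measurable_rth_smallest[OF assms(1,2)]]
  have "(\<lambda>\<omega>. rth_smallest D r (compose {..<D} h \<omega>)) \<in> borel_measurable (PiM {..<D} (\<lambda>_. M))" .
  moreover have "rth_smallest D r (compose {..<D} h \<omega>) = rth_smallest D r (\<lambda>i. h (\<omega> i))" for \<omega>
    by (rule rth_smallest_cong) (simp add: compose_def)
  ultimately show ?thesis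
    by simp
qed

lemma measurable_rth_smallest_real_distribution:
  assumes "1 \<le> r" "r \<le> D" "real_distribution Q"
  shows "rth_smallest D r \<in> borel_measurable (PiM {..<D} (\<lambda>_. Q))"
proof -
  have sets_eq: "sets (PiM {..<D} (\<lambda>_. Q)) = sets (PiM {..<D} (\<lambda>_. borel))"
    using assms(3) by (intro sets_PiM_cong) (simp_all add: real_distribution.events_eq_borel)
  show ?thesis
    unfolding measurable_cong_sets[OF sets_eq refl] by (rule measurable_rth_smallest[OF assms(1,2)])
qed

lemma abs_at_rth_smallest_le_sum:
  fixes F G :: "real \<Rightarrow> real"
  assumes "1 \<le> r" "r \<le> D" "\<And>x. \<bar>F x\<bar> \<le> G x"
  shows "\<bar>F (rth_smallest D r x)\<bar> \<le> (\<Sum>i<D. G (x i))"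
proof -
  obtain j where "j < D" "rth_smallest D r x = x j"
    using rth_smallest_mem[OF assms(1,2)] by blast
  moreover have "G (x j) \<le> (\<Sum>i<D. G (x i))" if "j < D"
  proof (rule member_le_sum[of j "{..<D}" "\<lambda>i. G (x i)"])
    show "0 \<le> G (x i)" for i
      using assms(3)[of "x i"] by linarith
  qed (use that in simp_all)
  ultimately show ?thesis
    using assms(3)[of "x j"] by simp
qed

lemma abs_le_one_plus_square: "\<bar>x\<bar> \<le> 1 + x\<^sup>2" for x :: real
proof (cases "\<bar>x\<bar> \<le> 1")
  case True
  then show ?thesis
    using zero_le_power2[of x] by linarith
next
  case False
  then have "\<bar>x\<bar> * 1 \<le> \<bar>x\<bar> * \<bar>x\<bar>"
    by (intro mult_left_mono) auto
  then show ?thesis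
    by (simp add: power2_eq_square abs_mult_self_eq)
qed

lemma (in real_distribution) integrable_of_square:
  "integrable M (\<lambda>x. x\<^sup>2) \<Longrightarrow> integrable M (\<lambda>x. x)"
  by (rule square_integrable_imp_integrable) simp_all

lemma (in real_distribution) var_of_eq:
  assumes "integrable M (\<lambda>x. x\<^sup>2)"
  shows "var_of M = (\<integral>x. x\<^sup>2 \<partial>M) - (mean_of M)\<^sup>2"
  using variance_eq[of "\<lambda>x. x"] integrable_of_square[OF assms] assms
  by (simp add: var_of_def mean_of_def)

lemma (in real_distribution) mean_of_affine:
  assumes "integrable M (\<lambda>x. x)"
  shows "mean_of (distr M borel (\<lambda>x. m + s * x)) = m + s * mean_of M"
proof -
  have "mean_of (distr M borel (\<lambda>x. m + s * x)) = (\<integral>x. m + s * x \<partial>M)"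
    unfolding mean_of_def by (rule integral_distr) simp_all
  also have "\<dots> = m + s * mean_of M"
    unfolding mean_of_def using assms
    by (subst Bochner_Integration.integral_add) (simp_all add: prob_space[unfolded space_eq_univ])
  finally show ?thesis .
qed

lemma (in real_distribution) var_of_affine:
  assumes "integrable M (\<lambda>x. x)"
  shows "var_of (distr M borel (\<lambda>x. m + s * x)) = s\<^sup>2 * var_of M"
proof -
  have "(m + s * x - (m + s * mean_of M))\<^sup>2 = s\<^sup>2 * (x - mean_of M)\<^sup>2" for x
    by (simp add: power2_eq_square algebra_simps)
  moreover have "var_of (distr M borel (\<lambda>x. m + s * x))
      = (\<integral>x. (m + s * x - (m + s * mean_of M))\<^sup>2 \<partial>M)"
    unfolding var_of_def mean_of_affine[OF assms] by (rule integral_distr) simp_all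
  ultimately show ?thesis
    by (simp add: var_of_def)
qed

lemma (in real_distribution) integrable_square_affine:
  assumes "integrable M (\<lambda>x. x\<^sup>2)"
  shows "integrable (distr M borel (\<lambda>x. m + s * x)) (\<lambda>x. x\<^sup>2)"
proof -
  have "integrable M (\<lambda>x. m\<^sup>2 + 2 * m * s * x + s\<^sup>2 * x\<^sup>2)"
    using assms integrable_of_square[OF assms] by simp
  moreover have "(m + s * x)\<^sup>2 = m\<^sup>2 + 2 * m * s * x + s\<^sup>2 * x\<^sup>2" for x
    by (simp add: power2_eq_square algebra_simps)
  ultimately show ?thesis
    by (simp add: integrable_distr_eq)
qed

lemma (in prob_space) integral_one_plus:
  fixes f :: "'a \<Rightarrow> real"
  assumes "integrable M f"
  shows "integrable M (\<lambda>x. 1 + f x)" "(\<integral>x. 1 + f x \<partial>M) = 1 + (\<integral>x. f x \<partial>M)"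
  using assms prob_space by (simp_all add: Bochner_Integration.integral_add)

section \<open>The negative binomial distribution\<close>

definition neg_binomial_term :: "'a::field_char_0 \<Rightarrow> 'a \<Rightarrow> nat \<Rightarrow> 'a" where
  "neg_binomial_term a z n = pochhammer a n / fact n * z ^ n"

lemma neg_gbinomial_power_eq:
  "((- a) gchoose n) * (- z) ^ n = neg_binomial_term a z n"
proof -
  have "((- a) gchoose n) * (- z) ^ n = ((- 1) ^ n * (- 1) ^ n) * pochhammer a n / fact n * z ^ n"
    by (simp add: gbinomial_pochhammer power_minus[of z])
  also have "(- 1 :: 'a) ^ n * (- 1) ^ n = 1"
    by (simp flip: power_mult_distrib)
  finally show ?thesis
    by (simp add: neg_binomial_term_def)
qed

lemma neg_binomial_series_complex:
  fixes a z :: complex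
  assumes "norm z < 1"
  shows "neg_binomial_term a z sums (1 - z) powr (- a)"
  using gen_binomial_complex[of "- z" "- a"] assms by (simp add: neg_gbinomial_power_eq)

lemma neg_binomial_series_real:
  fixes a x :: real
  assumes "\<bar>x\<bar> < 1"
  shows "neg_binomial_term a x sums (1 - x) powr (- a)"
  using gen_binomial_real[of "- x" "- a"] assms by (simp add: neg_gbinomial_power_eq)

lemma neg_binomial_term_Suc:
  "of_nat (Suc n) * neg_binomial_term a z (Suc n) = a * z * neg_binomial_term (a + 1) z n"
  unfolding neg_binomial_term_def pochhammer_rec fact_Suc power_Suc
  by (simp add: field_simps del: of_nat_Suc)

lemma neg_binomial_series_index:
  fixes a x :: real
  assumes "\<bar>x\<bar> < 1"
  shows "(\<lambda>n. real n * neg_binomial_term a x n) sums (a * x * (1 - x) powr (- a - 1))"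
proof -
  have "(\<lambda>n. a * x * neg_binomial_term (a + 1) x n) sums (a * x * (1 - x) powr (- (a + 1)))"
    by (intro sums_mult neg_binomial_series_real assms)
  then have "(\<lambda>n. real (Suc n) * neg_binomial_term a x (Suc n)) sums (a * x * (1 - x) powr (- a - 1))"
    by (simp only: neg_binomial_term_Suc minus_add_distrib diff_conv_add_uminus)
  from sums_Suc[OF this] show ?thesis
    by simp
qed

lemma neg_binomial_series_falling_index:
  fixes a x :: real
  assumes "\<bar>x\<bar> < 1"
  shows "(\<lambda>n. real n * (real n - 1) * neg_binomial_term a x n)
           sums (a * (a + 1) * x\<^sup>2 * (1 - x) powr (- a - 2))"
proof -
  have shift: "real (Suc n) * (real (Suc n) - 1) * neg_binomial_term a x (Suc n)
      = a * x * (real n * neg_binomial_term (a + 1) x n)" for n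
  proof -
    have "real (Suc n) * (real (Suc n) - 1) * neg_binomial_term a x (Suc n)
        = real n * (real (Suc n) * neg_binomial_term a x (Suc n))"
      by simp
    also have "\<dots> = a * x * (real n * neg_binomial_term (a + 1) x n)"
      by (simp only: neg_binomial_term_Suc ac_simps)
    finally show ?thesis .
  qed
  have "(\<lambda>n. a * x * (real n * neg_binomial_term (a + 1) x n))
          sums (a * x * ((a + 1) * x * (1 - x) powr (- (a + 1) - 1)))"
    by (intro sums_mult neg_binomial_series_index assms)
  moreover have "a * x * ((a + 1) * x * (1 - x) powr (- (a + 1) - 1))
      = a * (a + 1) * x\<^sup>2 * (1 - x) powr (- a - 2)"
    by (simp add: power2_eq_square algebra_simps)
  ultimately have "(\<lambda>n. real (Suc n) * (real (Suc n) - 1) * neg_binomial_term a x (Suc n))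
               sums (a * (a + 1) * x\<^sup>2 * (1 - x) powr (- a - 2))"
    by (simp only: shift)
  from sums_Suc[OF this] show ?thesis
    by simp
qed

definition nb_mean :: "real \<Rightarrow> real \<Rightarrow> real" where
  "nb_mean a p = a * (1 - p) / p"

definition nb_sd :: "real \<Rightarrow> real \<Rightarrow> real" where
  "nb_sd a p = sqrt (a * (1 - p)) / p"

lemma sets_NB [measurable_cong, simp]: "sets (NB a p) = sets borel"
  by (simp add: NB_def)

context
  fixes a p :: real
  assumes a_pos: "0 < a" and p_pos: "0 < p" and p_less_1: "p < 1"
begin

lemma nb_sd_pos: "0 < nb_sd a p"
  using a_pos p_pos p_less_1 by (simp add: nb_sd_def)

lemma nb_sd_square: "(nb_sd a p)\<^sup>2 = a * (1 - p) / p\<^sup>2"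
  using a_pos p_less_1 by (simp add: nb_sd_def power_divide)

lemma nb_pmf_eq_neg_binomial_term: "nb_pmf a p y = p powr a * neg_binomial_term a (1 - p) y"
proof -
  have "a \<notin> \<int>\<^sub>\<le>\<^sub>0"
    using a_pos by (auto elim!: nonpos_Ints_cases)
  then have "Gamma (real y + a) = pochhammer a y * Gamma a"
    using pochhammer_Gamma[of a y] Gamma_real_pos[OF a_pos] by (simp add: add.commute)
  then show ?thesis
    using Gamma_real_pos[OF a_pos] by (simp add: nb_pmf_def neg_binomial_term_def field_simps)
qed

lemma nb_pmf_nonneg: "0 \<le> nb_pmf a p y"
  using a_pos p_less_1
  by (simp add: nb_pmf_eq_neg_binomial_term neg_binomial_term_def pochhammer_nonneg)

lemma nb_pmf_sums_scaled:
  assumes "(\<lambda>y. f y * neg_binomial_term a (1 - p) y) sums s"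
  shows "(\<lambda>y. f y * nb_pmf a p y) sums (p powr a * s)"
  using sums_mult[OF assms, of "p powr a"] by (simp add: nb_pmf_eq_neg_binomial_term ac_simps)

lemma powr_times_powr_minus: "p powr a * (c * p powr (- a - real k)) = c / p ^ k"
proof -
  have "p powr a * p powr (- a - real k) = 1 / p ^ k"
    using p_pos by (simp add: powr_add[symmetric] powr_minus_divide powr_realpow)
  moreover have "p powr a * (c * p powr (- a - real k)) = c * (p powr a * p powr (- a - real k))"
    by (simp only: mult.left_commute)
  ultimately show ?thesis
    by simp
qed

lemma nb_pmf_sums: "nb_pmf a p sums 1"
proof -
  have "nb_pmf a p sums (p powr a * p powr (- a))"
    using nb_pmf_sums_scaled[of "\<lambda>_. 1"] neg_binomial_series_real[of "1 - p" a] p_pos p_less_1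
    by simp
  then show ?thesis
    using p_pos by (simp add: powr_minus)
qed

lemma nb_pmf_sums_index: "(\<lambda>y. real y * nb_pmf a p y) sums nb_mean a p"
proof -
  have "(\<lambda>y. real y * nb_pmf a p y) sums (p powr a * (a * (1 - p) * (1 - (1 - p)) powr (- a - 1)))"
    using p_pos p_less_1 by (intro nb_pmf_sums_scaled neg_binomial_series_index) simp
  also have "p powr a * (a * (1 - p) * (1 - (1 - p)) powr (- a - 1)) = nb_mean a p"
    using powr_times_powr_minus[of "a * (1 - p)" 1] by (simp add: nb_mean_def)
  finally show ?thesis .
qed

lemma nb_pmf_sums_index_square:
  "(\<lambda>y. (real y)\<^sup>2 * nb_pmf a p y) sums (a * (a + 1) * (1 - p)\<^sup>2 / p\<^sup>2 + nb_mean a p)"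
proof -
  have "(\<lambda>y. real y * (real y - 1) * nb_pmf a p y)
          sums (p powr a * (a * (a + 1) * (1 - p)\<^sup>2 * (1 - (1 - p)) powr (- a - 2)))"
    using p_pos p_less_1 by (intro nb_pmf_sums_scaled neg_binomial_series_falling_index) simp
  also have "p powr a * (a * (a + 1) * (1 - p)\<^sup>2 * (1 - (1 - p)) powr (- a - 2))
      = a * (a + 1) * (1 - p)\<^sup>2 / p\<^sup>2"
    using powr_times_powr_minus[of "a * (a + 1) * (1 - p)\<^sup>2" 2] by simp
  finally have "(\<lambda>y. real y * (real y - 1) * nb_pmf a p y + real y * nb_pmf a p y)
      sums (a * (a + 1) * (1 - p)\<^sup>2 / p\<^sup>2 + nb_mean a p)"
    by (rule sums_add[OF _ nb_pmf_sums_index])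
  also have "(\<lambda>y. real y * (real y - 1) * nb_pmf a p y + real y * nb_pmf a p y)
      = (\<lambda>y. (real y)\<^sup>2 * nb_pmf a p y)"
    by (simp add: fun_eq_iff power2_eq_square algebra_simps)
  finally show ?thesis .
qed

lemma prob_space_nb_density: "prob_space (density (count_space UNIV) (\<lambda>y. ennreal (nb_pmf a p y)))"
proof (rule prob_spaceI)
  have "emeasure (density (count_space UNIV) (\<lambda>y. ennreal (nb_pmf a p y))) UNIV
      = (\<Sum>y. ennreal (nb_pmf a p y))"
    by (simp add: emeasure_density nn_integral_count_space_nat)
  also have "\<dots> = ennreal (\<Sum>y. nb_pmf a p y)"
    using nb_pmf_sums nb_pmf_nonneg by (intro suminf_ennreal2) (auto simp: sums_iff)
  also have "(\<Sum>y. nb_pmf a p y) = 1"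
    using nb_pmf_sums by (simp add: sums_iff)
  finally show "emeasure (density (count_space UNIV) (\<lambda>y. ennreal (nb_pmf a p y)))
      (space (density (count_space UNIV) (\<lambda>y. ennreal (nb_pmf a p y)))) = 1"
    by simp
qed

lemma real_distribution_NB: "real_distribution (NB a p)"
proof -
  interpret prob_space "density (count_space UNIV) (\<lambda>y. ennreal (nb_pmf a p y))"
    by (rule prob_space_nb_density)
  show ?thesis
    unfolding NB_def real_distribution_def real_distribution_axioms_def
    by (auto intro!: prob_space_distr)
qed

lemma has_bochner_integral_NB:
  fixes f :: "real \<Rightarrow> 'b::{banach, second_countable_topology}"
  assumes [measurable]: "f \<in> borel_measurable borel"
    and summable: "summable (\<lambda>y. nb_pmf a p y * norm (f (real y)))"
  shows "has_bochner_integral (NB a p) f (\<Sum>y. nb_pmf a p y *\<^sub>R f (real y))"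
proof -
  have "integrable (count_space UNIV) (\<lambda>y. nb_pmf a p y *\<^sub>R f (real y))"
    unfolding integrable_count_space_nat_iff using summable nb_pmf_nonneg by simp
  then have "integrable (NB a p) f \<and> integral\<^sup>L (NB a p) f = (\<Sum>y. nb_pmf a p y *\<^sub>R f (real y))"
    unfolding NB_def using nb_pmf_nonneg
    by (simp add: integrable_distr_eq integral_distr integrable_density integral_density
        integral_count_space_nat)
  then show ?thesis
    by (simp add: has_bochner_integral_iff)
qed

lemma has_bochner_integral_NB_square:
  "has_bochner_integral (NB a p) (\<lambda>x. x\<^sup>2) (a * (a + 1) * (1 - p)\<^sup>2 / p\<^sup>2 + nb_mean a p)"
proof -
  have "has_bochner_integral (NB a p) (\<lambda>x. x\<^sup>2) (\<Sum>y. nb_pmf a p y *\<^sub>R (real y)\<^sup>2)"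
    using nb_pmf_sums_index_square by (intro has_bochner_integral_NB) (auto simp: sums_iff ac_simps)
  then show ?thesis
    using nb_pmf_sums_index_square by (simp add: sums_iff ac_simps)
qed

lemma integrable_NB_square: "integrable (NB a p) (\<lambda>x. x\<^sup>2)"
  using has_bochner_integral_NB_square by (rule integrable.intros)

lemma mean_of_NB: "mean_of (NB a p) = nb_mean a p"
proof -
  have "has_bochner_integral (NB a p) (\<lambda>x. x) (\<Sum>y. nb_pmf a p y *\<^sub>R real y)"
    using nb_pmf_sums_index by (intro has_bochner_integral_NB) (auto simp: sums_iff ac_simps)
  then show ?thesis
    using nb_pmf_sums_index by (simp add: mean_of_def has_bochner_integral_integral_eq sums_iff ac_simps)
qed

lemma var_of_NB: "var_of (NB a p) = (nb_sd a p)\<^sup>2"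
proof -
  have "var_of (NB a p) = (\<integral>x. x\<^sup>2 \<partial>NB a p) - (mean_of (NB a p))\<^sup>2"
    by (rule real_distribution.var_of_eq[OF real_distribution_NB integrable_NB_square])
  also have "\<dots> = (nb_sd a p)\<^sup>2"
    unfolding has_bochner_integral_integral_eq[OF has_bochner_integral_NB_square] mean_of_NB
      nb_sd_square nb_mean_def
    using p_pos by (simp add: field_simps power2_eq_square)
  finally show ?thesis .
qed

lemma char_NB_power_series:
  "char (NB a p) t = of_real (p powr a) * (1 - of_real (1 - p) * iexp t) powr (- of_real a)"
proof -
  define z where "z = of_real (1 - p) * iexp t"
  have z: "norm z < 1"
    using p_pos p_less_1 by (simp add: z_def norm_mult del: of_real_diff)
  have "char (NB a p) t = (\<Sum>y. nb_pmf a p y *\<^sub>R iexp (t * real y))"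
    unfolding char_def using nb_pmf_sums
    by (intro has_bochner_integral_integral_eq has_bochner_integral_NB) (auto simp: sums_iff)
  also have "\<dots> = of_real (p powr a) * (1 - z) powr (- of_real a)"
  proof (rule sums_unique[symmetric])
    have "nb_pmf a p y *\<^sub>R iexp (t * real y) = of_real (p powr a) * neg_binomial_term (of_real a) z y" for y
    proof -
      have "iexp (t * real y) = exp (of_nat y * (\<i> * of_real t))"
        by (simp add: ac_simps)
      then have "iexp (t * real y) = iexp t ^ y"
        by (simp only: exp_of_nat_mult)
      then show ?thesis
        by (simp add: nb_pmf_eq_neg_binomial_term neg_binomial_term_def z_def scaleR_conv_of_real
            pochhammer_of_real power_mult_distrib)
    qed
    then show "(\<lambda>y. nb_pmf a p y *\<^sub>R iexp (t * real y)) sums (of_real (p powr a) * (1 - z) powr (- of_real a))"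
      by (simp only:) (intro sums_mult neg_binomial_series_complex z)
  qed
  finally show ?thesis
    by (simp only: z_def)
qed

lemma char_NB: "char (NB a p) t = exp (- of_real a * Ln (1 - of_real ((1 - p) / p) * (iexp t - 1)))"
proof -
  define w where "w = 1 - of_real ((1 - p) / p) * (iexp t - 1)"
  have factor: "1 - of_real (1 - p) * iexp t = of_real p * w"
    using p_pos by (simp add: w_def field_simps)
  have "norm (of_real (1 - p) * iexp t) < 1"
    using p_pos p_less_1 by (simp add: norm_mult del: of_real_diff)
  with factor have w: "w \<noteq> 0"
    by auto
  have "Ln (of_real p * w) = of_real (ln p) + Ln w"
    using p_pos w by (simp add: Ln_times_of_real Ln_of_real)
  then have "(1 - of_real (1 - p) * iexp t) powr (- of_real a) = exp (- of_real a * (of_real (ln p) + Ln w))"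
    unfolding factor using p_pos w by (simp add: powr_def)
  moreover have "complex_of_real (p powr a) = exp (of_real a * of_real (ln p))"
    using p_pos by (simp add: powr_def exp_of_real[symmetric])
  ultimately have "char (NB a p) t = exp (of_real a * of_real (ln p)) * exp (- of_real a * (of_real (ln p) + Ln w))"
    by (simp add: char_NB_power_series)
  also have "\<dots> = exp (of_real a * of_real (ln p) + - of_real a * (of_real (ln p) + Ln w))"
    by (rule exp_add[symmetric])
  also have "of_real a * of_real (ln p) + - of_real a * (of_real (ln p) + Ln w) = - of_real a * Ln w"
    by (simp add: algebra_simps)
  finally show ?thesis
    by (simp add: w_def)
qed

end

section \<open>Asymptotic normality of the negative binomial distribution\<close>

definition NB_std :: "real \<Rightarrow> real \<Rightarrow> real measure" where
  "NB_std a p = distr (NB a p) borel (\<lambda>x. (x - nb_mean a p) / nb_sd a p)"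

text \<open>For \<open>q = (1 - p) / p\<close>, \<open>- Ln (1 - q * (iexp s - 1))\<close> is the logarithm of the characteristic
  function of \<open>NB 1 p\<close>, a law with mean \<open>q\<close> and variance \<open>q * (1 + q)\<close>; \<open>cgf_remainder q s\<close>
  is the error of its second-order Taylor polynomial.\<close>
definition cgf_remainder :: "real \<Rightarrow> real \<Rightarrow> complex" where
  "cgf_remainder q s = - Ln (1 - of_real q * (iexp s - 1)) - \<i> * of_real (q * s)
     + of_real (q * (1 + q) / 2 * s\<^sup>2)"

lemma norm_Ln_one_plus_remainder:
  fixes z :: complex
  assumes "norm z \<le> 1 / 2"
  shows "norm (Ln (1 + z) - z + z\<^sup>2 / 2) \<le> 2 * norm z ^ 3"
proof -
  let ?f = "\<lambda>n. (- 1) ^ Suc n / of_nat n * z ^ n :: complex"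
  have z: "norm z < 1"
    using assms by simp
  have "?f sums Ln (1 + z)"
    using Ln_series[OF z] by simp
  then have "(\<lambda>n. ?f (n + 3)) sums (Ln (1 + z) - (\<Sum>i<3. ?f i))"
    by (rule sums_split_initial_segment)
  moreover have "Ln (1 + z) - (\<Sum>i<3. ?f i) = Ln (1 + z) - z + z\<^sup>2 / 2"
    by (simp add: eval_nat_numeral)
  ultimately have sums: "(\<lambda>n. ?f (n + 3)) sums (Ln (1 + z) - z + z\<^sup>2 / 2)"
    by (simp only:)
  have bound: "norm (?f (n + 3)) \<le> norm z ^ 3 * norm z ^ n" for n
  proof -
    have "norm (?f (n + 3)) = norm z ^ (n + 3) / real (n + 3)"
      by (simp add: norm_mult norm_divide norm_power del: of_nat_add)
    also have "\<dots> \<le> norm z ^ (n + 3)"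
      by (simp add: divide_le_eq mult_le_cancel_left1)
    finally show ?thesis
      by (simp add: power_add mult.commute)
  qed
  have "norm (Ln (1 + z) - z + z\<^sup>2 / 2) \<le> (\<Sum>n. norm z ^ 3 * norm z ^ n)"
    using sums bound z
    by (subst sums_unique[OF sums]) (intro norm_suminf_le summable_mult summable_geometric; simp)
  also have "\<dots> = norm z ^ 3 / (1 - norm z)"
    using z by (simp add: suminf_mult suminf_geometric divide_inverse)
  also have "\<dots> \<le> norm z ^ 3 / (1 / 2)"
    using assms by (intro divide_left_mono) auto
  also have "\<dots> = 2 * norm z ^ 3"
    by simp
  finally show ?thesis .
qed

lemma iexp_taylor_bounds:
  shows "norm (iexp s - 1) \<le> \<bar>s\<bar>"
    and "norm (iexp s - 1 - \<i> * of_real s) \<le> s\<^sup>2 / 2"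
    and "norm (iexp s - 1 - \<i> * of_real s + of_real (s\<^sup>2 / 2)) \<le> \<bar>s\<bar> ^ 3 / 6"
  using iexp_approx1[of s 0] iexp_approx1[of s 1] iexp_approx1[of s 2]
  by (simp_all add: diff_diff_eq power2_eq_square eval_nat_numeral power_mult_distrib algebra_simps)

lemma norm_cgf_quadratic_term:
  assumes "0 \<le> q"
  shows "norm ((of_real q * (iexp s - 1))\<^sup>2 + of_real ((q * s)\<^sup>2)) \<le> q\<^sup>2 * \<bar>s\<bar> ^ 3"
proof -
  define v where "v = of_real q * (iexp s - 1)"
  have "norm v \<le> q * \<bar>s\<bar>"
    using iexp_taylor_bounds(1)[of s] assms by (simp add: v_def norm_mult mult_left_mono)
  then have plus: "norm (v + \<i> * of_real (q * s)) \<le> 2 * q * \<bar>s\<bar>"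
    using norm_triangle_ineq[of v "\<i> * of_real (q * s)"] assms by (simp add: norm_mult abs_mult)
  have "v\<^sup>2 + of_real ((q * s)\<^sup>2) = of_real q * (iexp s - 1 - \<i> * of_real s) * (v + \<i> * of_real (q * s))"
    by (simp add: v_def power2_eq_square algebra_simps)
  also have "norm \<dots> \<le> q * (s\<^sup>2 / 2) * (2 * q * \<bar>s\<bar>)"
    unfolding norm_mult using iexp_taylor_bounds(2)[of s] plus assms
    by (intro mult_mono) (auto intro: mult_left_mono)
  also have "\<dots> = q\<^sup>2 * \<bar>s\<bar> ^ 3"
    by (simp add: power2_eq_square power3_eq_cube abs_mult_self_eq)
  finally show ?thesis
    by (simp only: v_def)
qed

lemma cgf_remainder_bound:
  assumes "0 \<le> q" "q * \<bar>s\<bar> \<le> 1 / 2"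
  shows "norm (cgf_remainder q s) \<le> (q / 6 + q\<^sup>2 / 2 + 2 * q ^ 3) * \<bar>s\<bar> ^ 3"
proof -
  define v where "v = of_real q * (iexp s - 1)"
  define e2 where "e2 = iexp s - 1 - \<i> * of_real s + of_real (s\<^sup>2 / 2)"
  define L where "L = Ln (1 + - v) - - v + (- v)\<^sup>2 / 2"
  have "norm (of_real q * e2) = q * norm e2"
    using assms(1) by (simp add: norm_mult)
  also have "\<dots> \<le> q * (\<bar>s\<bar> ^ 3 / 6)"
    unfolding e2_def using iexp_taylor_bounds(3)[of s] assms(1) by (rule mult_left_mono)
  finally have linear: "norm (of_real q * e2) \<le> q * (\<bar>s\<bar> ^ 3 / 6)" .
  have quadratic: "norm ((v\<^sup>2 + of_real ((q * s)\<^sup>2)) / 2) \<le> q\<^sup>2 / 2 * \<bar>s\<bar> ^ 3"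
    using norm_cgf_quadratic_term[OF assms(1), of s] by (simp add: v_def norm_divide)
  have cubic: "norm L \<le> 2 * q ^ 3 * \<bar>s\<bar> ^ 3"
  proof -
    have v: "norm v \<le> q * \<bar>s\<bar>"
      using iexp_taylor_bounds(1)[of s] assms(1) by (simp add: v_def norm_mult mult_left_mono)
    have "norm L \<le> 2 * norm (- v) ^ 3"
      unfolding L_def using v assms by (intro norm_Ln_one_plus_remainder) simp
    also have "\<dots> \<le> 2 * (q * \<bar>s\<bar>) ^ 3"
      using v by (simp add: power_mono)
    finally show ?thesis
      by (simp add: power_mult_distrib)
  qed
  have "cgf_remainder q s = of_real q * e2 + (v\<^sup>2 + of_real ((q * s)\<^sup>2)) / 2 - L"
    by (simp add: cgf_remainder_def v_def e2_def L_def field_simps power2_eq_square)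
  then have "norm (cgf_remainder q s)
      \<le> q * (\<bar>s\<bar> ^ 3 / 6) + q\<^sup>2 / 2 * \<bar>s\<bar> ^ 3 + 2 * q ^ 3 * \<bar>s\<bar> ^ 3"
    using linear quadratic cubic
    by (simp only:) (intro order_trans[OF norm_triangle_ineq4] add_mono order_trans[OF norm_triangle_ineq])
  then show ?thesis
    by (simp add: algebra_simps)
qed

context
  fixes a p :: real
  assumes a_pos: "0 < a" and p_pos: "0 < p" and p_less_1: "p < 1"
begin

lemma NB_std_eq_affine:
  "NB_std a p = distr (NB a p) borel (\<lambda>x. - nb_mean a p / nb_sd a p + 1 / nb_sd a p * x)"
  unfolding NB_std_def
  by (rule arg_cong[where f = "distr (NB a p) borel"]) (simp add: fun_eq_iff diff_divide_distrib)

lemma real_distribution_NB_std: "real_distribution (NB_std a p)"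
proof -
  interpret real_distribution "NB a p"
    by (rule real_distribution_NB[OF a_pos p_pos p_less_1])
  show ?thesis
    unfolding NB_std_def real_distribution_def real_distribution_axioms_def
    by (auto intro!: prob_space_distr)
qed

lemma integrable_NB_std_square: "integrable (NB_std a p) (\<lambda>z. z\<^sup>2)"
  unfolding NB_std_eq_affine
  by (rule real_distribution.integrable_square_affine[OF real_distribution_NB integrable_NB_square])
     (use a_pos p_pos p_less_1 in auto)

lemma integral_NB_std_square: "(\<integral>z. z\<^sup>2 \<partial>NB_std a p) = 1"
proof -
  interpret real_distribution "NB a p"
    by (rule real_distribution_NB[OF a_pos p_pos p_less_1])
  have mean_NB: "integrable (NB a p) (\<lambda>x. x)"
    by (rule integrable_of_square[OF integrable_NB_square[OF a_pos p_pos p_less_1]])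
  have "mean_of (NB_std a p) = 0"
    unfolding NB_std_eq_affine mean_of_affine[OF mean_NB] mean_of_NB[OF a_pos p_pos p_less_1]
    using nb_sd_pos[OF a_pos p_pos p_less_1] by simp
  moreover have "var_of (NB_std a p) = 1"
    unfolding NB_std_eq_affine var_of_affine[OF mean_NB] var_of_NB[OF a_pos p_pos p_less_1]
    using nb_sd_pos[OF a_pos p_pos p_less_1] by (simp add: power_divide)
  ultimately show ?thesis
    using real_distribution.var_of_eq[OF real_distribution_NB_std integrable_NB_std_square] by simp
qed

lemma NB_eq_distr_NB_std: "NB a p = distr (NB_std a p) borel (\<lambda>z. nb_mean a p + nb_sd a p * z)"
proof -
  have "distr (NB_std a p) borel (\<lambda>z. nb_mean a p + nb_sd a p * z)
      = distr (NB a p) borel ((\<lambda>z. nb_mean a p + nb_sd a p * z) \<circ> (\<lambda>x. (x - nb_mean a p) / nb_sd a p))"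
    unfolding NB_std_def by (subst distr_distr) auto
  also have "(\<lambda>z. nb_mean a p + nb_sd a p * z) \<circ> (\<lambda>x. (x - nb_mean a p) / nb_sd a p) = (\<lambda>x. x)"
    using nb_sd_pos[OF a_pos p_pos p_less_1] by (auto simp: fun_eq_iff)
  also have "distr (NB a p) borel (\<lambda>x. x) = NB a p"
    by (rule distr_id2) simp
  finally show ?thesis ..
qed

lemma char_NB_std:
  "char (NB_std a p) t
     = exp (of_real a * cgf_remainder ((1 - p) / p) (t / nb_sd a p) - of_real (t\<^sup>2 / 2))"
proof -
  let ?m = "nb_mean a p" and ?s = "nb_sd a p" and ?q = "(1 - p) / p"
  have s_pos: "0 < ?s"
    by (rule nb_sd_pos[OF a_pos p_pos p_less_1])
  have shift: "iexp (t * ((x - ?m) / ?s)) = iexp (- (t * ?m / ?s)) * iexp (t / ?s * x)" for x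
  proof -
    have "\<i> * of_real (t * ((x - ?m) / ?s)) = \<i> * of_real (- (t * ?m / ?s)) + \<i> * of_real (t / ?s * x)"
      by (simp add: algebra_simps diff_divide_distrib)
    then show ?thesis
      by (simp only: exp_add)
  qed
  have mean: "a * (?q * (t / ?s)) = t * ?m / ?s"
    by (simp add: nb_mean_def)
  have square: "(t / ?s)\<^sup>2 = t\<^sup>2 / (a * (1 - p) / p\<^sup>2)"
    by (simp add: power_divide nb_sd_square[OF a_pos p_pos p_less_1])
  have var: "a * (?q * (1 + ?q) / 2 * (t / ?s)\<^sup>2) = t\<^sup>2 / 2"
    unfolding square using a_pos p_pos p_less_1 by (simp add: field_simps power2_eq_square)
  have "char (NB_std a p) t = (\<integral>x. iexp (t * ((x - ?m) / ?s)) \<partial>NB a p)"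
    unfolding char_def NB_std_def by (rule integral_distr) simp_all
  also have "\<dots> = iexp (- (t * ?m / ?s)) * char (NB a p) (t / ?s)"
    unfolding shift char_def by simp
  also have "\<dots> = exp (\<i> * of_real (- (t * ?m / ?s)) + - of_real a * Ln (1 - of_real ?q * (iexp (t / ?s) - 1)))"
    unfolding char_NB[OF a_pos p_pos p_less_1] by (simp only: exp_add)
  also have "\<i> * of_real (- (t * ?m / ?s)) + - of_real a * Ln (1 - of_real ?q * (iexp (t / ?s) - 1))
      = of_real a * cgf_remainder ?q (t / ?s) - of_real (t\<^sup>2 / 2)"
    unfolding cgf_remainder_def mean[symmetric] var[symmetric] by (simp add: algebra_simps)
  finally show ?thesis .
qed

end

lemma cgf_remainder_scaled_tendsto:
  assumes p: "0 < p" "p < 1"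
  shows "((\<lambda>a. of_real a * cgf_remainder ((1 - p) / p) (t / nb_sd a p)) \<longlongrightarrow> 0) at_top"
proof -
  define q where "q = (1 - p) / p"
  define C where "C = (q / 6 + q\<^sup>2 / 2 + 2 * q ^ 3) * (t\<^sup>2 / (q * (1 + q)))"
  define s where "s a = t / nb_sd a p" for a
  have q: "0 < q"
    using p by (simp add: q_def)
  have s: "(s \<longlongrightarrow> 0) at_top"
    using p unfolding s_def nb_sd_def by real_asymp
  have "\<forall>\<^sub>F a in at_top. \<bar>s a\<bar> < 1 / (2 * q)"
    using order_tendstoD(2)[OF tendsto_rabs_zero[OF s]] q by simp
  then have small: "\<forall>\<^sub>F a in at_top. 0 < a \<and> q * \<bar>s a\<bar> \<le> 1 / 2"
    using eventually_gt_at_top[of 0]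
    by eventually_elim (use q in \<open>auto simp: field_simps\<close>)
  have "((\<lambda>a. of_real a * cgf_remainder q (s a)) \<longlongrightarrow> 0) at_top"
  proof (rule Lim_null_comparison)
    show "\<forall>\<^sub>F a in at_top. norm (of_real a * cgf_remainder q (s a)) \<le> C * \<bar>s a\<bar>"
      using small
    proof eventually_elim
      case (elim a)
      have square: "(s a)\<^sup>2 = t\<^sup>2 / (a * (1 - p) / p\<^sup>2)"
        using nb_sd_square[of a p] elim p by (simp add: s_def power_divide)
      have scale: "a * (s a)\<^sup>2 = t\<^sup>2 / (q * (1 + q))"
        unfolding square using elim p by (simp add: q_def field_simps power2_eq_square)
      have "norm (of_real a * cgf_remainder q (s a))
          \<le> a * ((q / 6 + q\<^sup>2 / 2 + 2 * q ^ 3) * \<bar>s a\<bar> ^ 3)"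
        using elim q by (simp add: norm_mult mult_left_mono cgf_remainder_bound)
      also have "\<bar>s a\<bar> ^ 3 = (s a)\<^sup>2 * \<bar>s a\<bar>"
        by (simp add: power2_eq_square power3_eq_cube abs_mult_self_eq)
      also have "a * ((q / 6 + q\<^sup>2 / 2 + 2 * q ^ 3) * ((s a)\<^sup>2 * \<bar>s a\<bar>)) = C * \<bar>s a\<bar>"
        unfolding C_def scale[symmetric] by (simp only: ac_simps)
      finally show ?case .
    qed
    show "((\<lambda>a. C * \<bar>s a\<bar>) \<longlongrightarrow> 0) at_top"
      by (intro tendsto_mult_right_zero tendsto_rabs_zero s)
  qed
  then show ?thesis
    by (simp only: q_def s_def)
qed

lemma char_NB_std_tendsto:
  assumes p: "0 < p" "p < 1"
  shows "((\<lambda>a. char (NB_std a p) t) \<longlongrightarrow> char std_normal t) at_top"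
proof -
  have "((\<lambda>a. exp (of_real a * cgf_remainder ((1 - p) / p) (t / nb_sd a p) - of_real (t\<^sup>2 / 2)))
      \<longlongrightarrow> exp (0 - of_real (t\<^sup>2 / 2))) at_top"
    by (intro tendsto_intros cgf_remainder_scaled_tendsto p)
  moreover have "exp (0 - complex_of_real (t\<^sup>2 / 2)) = char std_normal t"
    by (simp add: std_normal_def char_std_normal_distribution exp_of_real[symmetric])
  moreover have "\<forall>\<^sub>F a in at_top.
      exp (of_real a * cgf_remainder ((1 - p) / p) (t / nb_sd a p) - of_real (t\<^sup>2 / 2)) = char (NB_std a p) t"
    using eventually_gt_at_top[of 0] by eventually_elim (simp add: char_NB_std p)
  ultimately show ?thesis
    using Lim_transform_eventually by fastforce
qed

section \<open>Pratt's lemma\<close>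

lemma integral_abs_diff_tendsto_zero:
  fixes g :: "nat \<Rightarrow> 'a \<Rightarrow> real"
  assumes int: "\<And>n. integrable M (g n)" "integrable M G"
    and nonneg: "\<And>n. AE x in M. 0 \<le> g n x"
    and lim: "AE x in M. (\<lambda>n. g n x) \<longlonglongrightarrow> G x"
    and lim_integral: "(\<lambda>n. \<integral>x. g n x \<partial>M) \<longlonglongrightarrow> (\<integral>x. G x \<partial>M)"
  shows "(\<lambda>n. \<integral>x. \<bar>g n x - G x\<bar> \<partial>M) \<longlonglongrightarrow> 0"
proof -
  have [measurable]: "g n \<in> borel_measurable M" "G \<in> borel_measurable M" for n
    using int by auto
  have "\<bar>a - b\<bar> = (a - b) + 2 * max 0 (b - a)" for a b :: real
    by (simp add: max_def)
  then have split: "(\<integral>x. \<bar>g n x - G x\<bar> \<partial>M)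
      = ((\<integral>x. g n x \<partial>M) - (\<integral>x. G x \<partial>M)) + 2 * (\<integral>x. max 0 (G x - g n x) \<partial>M)" for n
    using int by simp
  have "(\<lambda>n. \<integral>x. max 0 (G x - g n x) \<partial>M) \<longlonglongrightarrow> (\<integral>x. max 0 (G x - G x) \<partial>M)"
  proof (rule integral_dominated_convergence[where w = "\<lambda>x. \<bar>G x\<bar>"])
    show "AE x in M. (\<lambda>n. max 0 (G x - g n x)) \<longlonglongrightarrow> max 0 (G x - G x)"
      using lim by eventually_elim (intro tendsto_intros)
    show "AE x in M. norm (max 0 (G x - g n x)) \<le> \<bar>G x\<bar>" for n
      using nonneg[of n] by eventually_elim auto
  qed (use int in auto)
  then have "(\<lambda>n. ((\<integral>x. g n x \<partial>M) - (\<integral>x. G x \<partial>M)) + 2 * (\<integral>x. max 0 (G x - g n x) \<partial>M))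
      \<longlonglongrightarrow> ((\<integral>x. G x \<partial>M) - (\<integral>x. G x \<partial>M)) + 2 * 0"
    by (intro tendsto_intros lim_integral) simp
  then show ?thesis
    by (simp add: split)
qed

lemma integral_clip_tendsto:
  fixes f :: "nat \<Rightarrow> 'a \<Rightarrow> real"
  assumes [measurable]: "\<And>n. f n \<in> borel_measurable M" "F \<in> borel_measurable M"
    and int: "integrable M G" and F_bound: "AE x in M. \<bar>F x\<bar> \<le> G x"
    and lim_f: "AE x in M. (\<lambda>n. f n x) \<longlonglongrightarrow> F x"
  shows "(\<lambda>n. \<integral>x. max (- G x) (min (G x) (f n x)) \<partial>M) \<longlonglongrightarrow> (\<integral>x. F x \<partial>M)"
proof (rule integral_dominated_convergence[where w = "\<lambda>x. \<bar>G x\<bar>"])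
  have [measurable]: "G \<in> borel_measurable M"
    using int by auto
  show "(\<lambda>x. max (- G x) (min (G x) (f n x))) \<in> borel_measurable M" for n
    by measurable
  show "AE x in M. (\<lambda>n. max (- G x) (min (G x) (f n x))) \<longlonglongrightarrow> F x"
    using F_bound lim_f
  proof eventually_elim
    case (elim x)
    then have "(\<lambda>n. max (- G x) (min (G x) (f n x))) \<longlonglongrightarrow> max (- G x) (min (G x) (F x))"
      by (intro tendsto_intros)
    also have "max (- G x) (min (G x) (F x)) = F x"
      using elim by auto
    finally show ?case .
  qed
  show "AE x in M. norm (max (- G x) (min (G x) (f n x))) \<le> \<bar>G x\<bar>" for n
    by (auto intro!: AE_I2)
qed (use int in auto)

lemma abs_integral_diff_clip_le:
  fixes f :: "'a \<Rightarrow> real"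
  assumes int: "integrable M f" "integrable M g" "integrable M G"
    and bound: "AE x in M. \<bar>f x\<bar> \<le> g x"
  shows "\<bar>(\<integral>x. f x \<partial>M) - (\<integral>x. max (- G x) (min (G x) (f x)) \<partial>M)\<bar> \<le> (\<integral>x. \<bar>g x - G x\<bar> \<partial>M)"
proof -
  have [measurable]: "f \<in> borel_measurable M" "G \<in> borel_measurable M"
    using int by auto
  have int_clip: "integrable M (\<lambda>x. max (- G x) (min (G x) (f x)))"
    by (rule Bochner_Integration.integrable_bound[OF integrable_abs[OF int(3)]]) (auto intro!: AE_I2)
  have "AE x in M. \<bar>f x - max (- G x) (min (G x) (f x))\<bar> \<le> \<bar>g x - G x\<bar>"
    using bound by eventually_elim auto
  then have "(\<integral>x. \<bar>f x - max (- G x) (min (G x) (f x))\<bar> \<partial>M) \<le> (\<integral>x. \<bar>g x - G x\<bar> \<partial>M)"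
    using int int_clip by (intro integral_mono_AE) auto
  then show ?thesis
    using integral_abs_bound[of M "\<lambda>x. f x - max (- G x) (min (G x) (f x))"]
    by (simp add: Bochner_Integration.integral_diff[OF int(1) int_clip])
qed

lemma pratt_integral_tendsto:
  fixes f g :: "nat \<Rightarrow> 'a \<Rightarrow> real"
  assumes [measurable]: "\<And>n. f n \<in> borel_measurable M" "F \<in> borel_measurable M"
    and int: "\<And>n. integrable M (g n)" "integrable M G"
    and bound: "\<And>n. AE x in M. \<bar>f n x\<bar> \<le> g n x"
    and lim_f: "AE x in M. (\<lambda>n. f n x) \<longlonglongrightarrow> F x"
    and lim_g: "AE x in M. (\<lambda>n. g n x) \<longlonglongrightarrow> G x"
    and lim_integral: "(\<lambda>n. \<integral>x. g n x \<partial>M) \<longlonglongrightarrow> (\<integral>x. G x \<partial>M)"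
  shows "(\<lambda>n. \<integral>x. f n x \<partial>M) \<longlonglongrightarrow> (\<integral>x. F x \<partial>M)"
proof -
  (* Clipped to [-G, G], the f n converge by dominated convergence, and the clipping error
     is at most |g n - G|. *)
  have int_f: "integrable M (f n)" for n
  proof (rule Bochner_Integration.integrable_bound[OF int(1)[of n]])
    show "AE x in M. norm (f n x) \<le> norm (g n x)"
      using bound[of n] by eventually_elim auto
  qed simp
  have "AE x in M. \<forall>n. \<bar>f n x\<bar> \<le> g n x"
    using bound by (simp add: AE_all_countable)
  then have "AE x in M. \<bar>F x\<bar> \<le> G x"
    using lim_f lim_g by eventually_elim (auto intro: LIMSEQ_le tendsto_rabs)
  then have "(\<lambda>n. \<integral>x. max (- G x) (min (G x) (f n x)) \<partial>M) \<longlonglongrightarrow> (\<integral>x. F x \<partial>M)"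
    using int(2) lim_f by (intro integral_clip_tendsto) simp_all
  moreover have "(\<lambda>n. (\<integral>x. f n x \<partial>M) - (\<integral>x. max (- G x) (min (G x) (f n x)) \<partial>M)) \<longlonglongrightarrow> 0"
  proof (rule Lim_null_comparison)
    show "\<forall>\<^sub>F n in sequentially. norm ((\<integral>x. f n x \<partial>M) - (\<integral>x. max (- G x) (min (G x) (f n x)) \<partial>M))
        \<le> (\<integral>x. \<bar>g n x - G x\<bar> \<partial>M)"
      using abs_integral_diff_clip_le[OF int_f int(1) int(2) bound] by simp
    have "AE x in M. 0 \<le> g n x" for n
      using bound[of n] by eventually_elim auto
    then show "(\<lambda>n. \<integral>x. \<bar>g n x - G x\<bar> \<partial>M) \<longlonglongrightarrow> 0"
      by (rule integral_abs_diff_tendsto_zero[OF int _ lim_g lim_integral])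
  qed
  ultimately show ?thesis
    by (rule Lim_transform)
qed

lemma real_distribution_order_stat_law:
  assumes "1 \<le> r" "r \<le> D" "real_distribution Q"
  shows "real_distribution (order_stat_law D r Q)"
proof -
  interpret P: prob_space "PiM {..<D} (\<lambda>_. Q)"
    using assms(3) by (intro prob_space_PiM) (simp add: real_distribution_def)
  show ?thesis
    unfolding order_stat_law_def real_distribution_def real_distribution_axioms_def
    using measurable_rth_smallest_real_distribution[OF assms] by (auto intro!: P.prob_space_distr)
qed

lemma order_stat_law_distr:
  assumes "prob_space M" "h \<in> borel_measurable M" "1 \<le> r" "r \<le> D"
  shows "order_stat_law D r (distr M borel h)
    = distr (PiM {..<D} (\<lambda>_. M)) borel (\<lambda>\<omega>. rth_smallest D r (\<lambda>i. h (\<omega> i)))"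
proof -
  let ?Q = "distr M borel h"
  interpret M: prob_space M
    by fact
  have Q: "real_distribution ?Q"
    using assms(2) by (auto simp: real_distribution_def real_distribution_axioms_def intro!: M.prob_space_distr)
  have h: "h \<in> measurable M ?Q"
    using assms(2) unfolding measurable_cong_sets[OF refl sets_distr] .
  have "distr M ?Q h = ?Q"
    by (rule distr_cong) simp_all
  then have PiM_eq: "distr (PiM {..<D} (\<lambda>_. M)) (PiM {..<D} (\<lambda>_. ?Q)) (compose {..<D} h)
      = PiM {..<D} (\<lambda>_. ?Q)"
    using distr_PiM_finite_prob_space'[of "{..<D}" "\<lambda>_. M" "\<lambda>_. ?Q" h] Q h assms(1)
    by (simp add: real_distribution_def)
  have "compose {..<D} h \<in> measurable (PiM {..<D} (\<lambda>_. M)) (PiM {..<D} (\<lambda>_. ?Q))"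
    using h unfolding compose_def by measurable
  then have "order_stat_law D r ?Q
      = distr (PiM {..<D} (\<lambda>_. M)) borel (rth_smallest D r \<circ> compose {..<D} h)"
    unfolding order_stat_law_def
    by (subst PiM_eq[symmetric]) (intro distr_distr measurable_rth_smallest_real_distribution[OF assms(3,4) Q])
  also have "\<dots> = distr (PiM {..<D} (\<lambda>_. M)) borel (\<lambda>\<omega>. rth_smallest D r (\<lambda>i. h (\<omega> i)))"
    by (rule distr_cong) (auto intro: rth_smallest_cong simp: compose_def)
  finally show ?thesis .
qed

lemma integral_order_stat_law_distr:
  fixes F :: "real \<Rightarrow> 'b::{banach, second_countable_topology}"
  assumes "prob_space M" "h \<in> borel_measurable M" "1 \<le> r" "r \<le> D" "F \<in> borel_measurable borel"
  shows "(\<integral>x. F x \<partial>order_stat_law D r (distr M borel h))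
    = (\<integral>\<omega>. F (rth_smallest D r (\<lambda>i. h (\<omega> i))) \<partial>PiM {..<D} (\<lambda>_. M))"
  unfolding order_stat_law_distr[OF assms(1-4)]
  by (rule integral_distr[OF measurable_rth_smallest_components[OF assms(3,4,2)] assms(5)])

lemma order_stat_law_affine:
  assumes "1 \<le> r" "r \<le> D" "real_distribution Q" "0 < s"
  shows "order_stat_law D r (distr Q borel (\<lambda>z. m + s * z))
    = distr (order_stat_law D r Q) borel (\<lambda>z. m + s * z)"
proof -
  interpret Q: real_distribution Q
    by fact
  have "strict_mono (\<lambda>z. m + s * z)"
    using assms(4) by (intro strict_monoI) simp
  have "order_stat_law D r (distr Q borel (\<lambda>z. m + s * z))
      = distr (PiM {..<D} (\<lambda>_. Q)) borel (\<lambda>\<omega>. rth_smallest D r (\<lambda>i. m + s * \<omega> i))"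
    by (rule order_stat_law_distr[OF Q.prob_space_axioms _ assms(1,2)]) simp
  also have "\<dots> = distr (PiM {..<D} (\<lambda>_. Q)) borel (\<lambda>\<omega>. m + s * rth_smallest D r \<omega>)"
    using rth_smallest_strict_mono[OF assms(1,2) \<open>strict_mono (\<lambda>z. m + s * z)\<close>] by simp
  also have "\<dots> = distr (order_stat_law D r Q) borel (\<lambda>z. m + s * z)"
    unfolding order_stat_law_def
    using measurable_rth_smallest_real_distribution[OF assms(1-3)]
    by (subst distr_distr) (simp_all add: comp_def)
  finally show ?thesis .
qed

lemma has_bochner_integral_PiM_sum_components:
  assumes "prob_space M" "integrable M f"
  shows "has_bochner_integral (PiM {..<D} (\<lambda>_. M)) (\<lambda>\<omega>. \<Sum>i<D. f (\<omega> i)) (real D * (\<integral>x. f x \<partial>M))"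
proof -
  have [measurable]: "f \<in> borel_measurable M"
    using assms(2) by simp
  have component: "has_bochner_integral (PiM {..<D} (\<lambda>_. M)) (\<lambda>\<omega>. f (\<omega> i)) (\<integral>x. f x \<partial>M)"
    if "i < D" for i
  proof -
    have proj: "(\<lambda>\<omega>. \<omega> i) \<in> measurable (PiM {..<D} (\<lambda>_. M)) M"
      using that by simp
    have "distr (PiM {..<D} (\<lambda>_. M)) M (\<lambda>\<omega>. \<omega> i) = M"
      using assms(1) that by (intro distr_PiM_component) auto
    then show ?thesis
      using assms(2) integrable_distr_eq[OF proj, of f] integral_distr[OF proj, of f]
      by (simp add: has_bochner_integral_iff)
  qed
  have "has_bochner_integral (PiM {..<D} (\<lambda>_. M)) (\<lambda>\<omega>. \<Sum>i<D. f (\<omega> i)) (\<Sum>i<D. \<integral>x. f x \<partial>M)"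
    using component by (intro has_bochner_integral_sum) simp
  then show ?thesis
    by simp
qed

lemma integrable_order_stat_law:
  fixes F G :: "real \<Rightarrow> real"
  assumes "1 \<le> r" "r \<le> D" "real_distribution Q" "integrable Q G"
    and [measurable]: "F \<in> borel_measurable borel" and bound: "\<And>x. \<bar>F x\<bar> \<le> G x"
  shows "integrable (order_stat_law D r Q) F"
proof -
  have [measurable]: "rth_smallest D r \<in> borel_measurable (PiM {..<D} (\<lambda>_. Q))"
    by (rule measurable_rth_smallest_real_distribution[OF assms(1-3)])
  have "integrable (PiM {..<D} (\<lambda>_. Q)) (\<lambda>\<omega>. \<Sum>i<D. G (\<omega> i))"
    using has_bochner_integral_PiM_sum_components[of Q G D] assms(3,4)
    by (auto simp: real_distribution_def intro: integrable.intros)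
  then have "integrable (PiM {..<D} (\<lambda>_. Q)) (\<lambda>\<omega>. F (rth_smallest D r \<omega>))"
    by (rule Bochner_Integration.integrable_bound)
       (auto intro!: AE_I2 order_trans[OF abs_at_rth_smallest_le_sum[OF assms(1,2) bound]])
  then show ?thesis
    unfolding order_stat_law_def by (simp add: integrable_distr_eq)
qed

theorem order_stat_law_integral_tendsto:
  fixes Q :: "nat \<Rightarrow> real measure" and F G :: "real \<Rightarrow> real"
  assumes r: "1 \<le> r" "r \<le> D"
    and Q: "\<And>n. real_distribution (Q n)" and L: "real_distribution L" and weak: "weak_conv_m Q L"
    and F: "continuous_on UNIV F" and G: "continuous_on UNIV G" and bound: "\<And>x. \<bar>F x\<bar> \<le> G x"
    and int: "\<And>n. integrable (Q n) G" "integrable L G"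
    and lim_integral: "(\<lambda>n. \<integral>x. G x \<partial>Q n) \<longlonglongrightarrow> (\<integral>x. G x \<partial>L)"
  shows "(\<lambda>n. \<integral>x. F x \<partial>order_stat_law D r (Q n)) \<longlonglongrightarrow> (\<integral>x. F x \<partial>order_stat_law D r L)"
proof -
  obtain \<Omega> :: "real measure" and X :: "nat \<Rightarrow> real \<Rightarrow> real" and Y :: "real \<Rightarrow> real"
    where \<Omega>: "prob_space \<Omega>" and X [measurable]: "\<And>n. X n \<in> borel_measurable \<Omega>"
      and law_X: "\<And>n. distr \<Omega> borel (X n) = Q n" and Y: "Y \<in> measurable \<Omega> lborel"
      and law_Y: "distr \<Omega> borel Y = L" and lim: "\<And>x. x \<in> space \<Omega> \<Longrightarrow> (\<lambda>n. X n x) \<longlonglongrightarrow> Y x"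
    using Skorohod[OF Q L weak] by blast
  have [measurable]: "Y \<in> borel_measurable \<Omega>" "F \<in> borel_measurable borel" "G \<in> borel_measurable borel"
    using Y F G by (simp_all add: borel_measurable_continuous_onI)
  let ?P = "PiM {..<D} (\<lambda>_. \<Omega>)"
  note integral_law = integral_order_stat_law_distr[OF \<Omega> _ r \<open>F \<in> borel_measurable borel\<close>]
  have dominating: "has_bochner_integral ?P (\<lambda>\<omega>. \<Sum>i<D. G (h (\<omega> i))) (real D * (\<integral>x. G x \<partial>distr \<Omega> borel h))"
    if [measurable]: "h \<in> borel_measurable \<Omega>" and "integrable (distr \<Omega> borel h) G" for h
    using has_bochner_integral_PiM_sum_components[OF \<Omega>, of "\<lambda>x. G (h x)" D] that(2)
    by (simp add: integrable_distr_eq integral_distr)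
  have space: "\<omega> i \<in> space \<Omega>" if "\<omega> \<in> space ?P" "i < D" for \<omega> i
    using that by (auto simp: space_PiM)
  have isCont_F: "isCont F x" and isCont_G: "isCont G x" for x
    using F G by (simp_all add: continuous_on_eq_continuous_at)
  show ?thesis
    unfolding law_X[symmetric] law_Y[symmetric] integral_law[OF X] integral_law[OF \<open>Y \<in> borel_measurable \<Omega>\<close>]
  proof (rule pratt_integral_tendsto[where g = "\<lambda>n \<omega>. \<Sum>i<D. G (X n (\<omega> i))"
        and G = "\<lambda>\<omega>. \<Sum>i<D. G (Y (\<omega> i))"])
    show "(\<lambda>\<omega>. F (rth_smallest D r (\<lambda>i. X n (\<omega> i)))) \<in> borel_measurable ?P" for n
      using r by measurable
    show "(\<lambda>\<omega>. F (rth_smallest D r (\<lambda>i. Y (\<omega> i)))) \<in> borel_measurable ?P"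
      using r by measurable
    show "integrable ?P (\<lambda>\<omega>. \<Sum>i<D. G (X n (\<omega> i)))" for n
      using dominating[OF X] int(1) law_X by (auto intro: integrable.intros)
    show "integrable ?P (\<lambda>\<omega>. \<Sum>i<D. G (Y (\<omega> i)))"
      using dominating[of Y] int(2) law_Y by (auto intro: integrable.intros)
    show "AE \<omega> in ?P. \<bar>F (rth_smallest D r (\<lambda>i. X n (\<omega> i)))\<bar> \<le> (\<Sum>i<D. G (X n (\<omega> i)))" for n
      by (intro AE_I2 abs_at_rth_smallest_le_sum[OF r bound])
    show "AE \<omega> in ?P. (\<lambda>n. F (rth_smallest D r (\<lambda>i. X n (\<omega> i))))
        \<longlonglongrightarrow> F (rth_smallest D r (\<lambda>i. Y (\<omega> i)))"
      using lim space
      by (intro AE_I2 isCont_tendsto_compose[OF isCont_F] rth_smallest_tendsto[OF r]) auto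
    show "AE \<omega> in ?P. (\<lambda>n. \<Sum>i<D. G (X n (\<omega> i))) \<longlonglongrightarrow> (\<Sum>i<D. G (Y (\<omega> i)))"
      using lim space by (intro AE_I2 tendsto_sum isCont_tendsto_compose[OF isCont_G]) auto
    show "(\<lambda>n. \<integral>\<omega>. (\<Sum>i<D. G (X n (\<omega> i))) \<partial>?P) \<longlonglongrightarrow> (\<integral>\<omega>. (\<Sum>i<D. G (Y (\<omega> i))) \<partial>?P)"
      using lim_integral int
      by (simp add: has_bochner_integral_integral_eq[OF dominating] law_X law_Y tendsto_mult_left)
  qed
qed

lemma tendsto_at_top_sequentially_pos:
  fixes f :: "real \<Rightarrow> 'a::first_countable_topology"
  assumes "\<And>X. (\<And>n. 0 < X n) \<Longrightarrow> filterlim X at_top sequentially \<Longrightarrow> (\<lambda>n. f (X n)) \<longlonglongrightarrow> l"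
  shows "(f \<longlongrightarrow> l) at_top"
proof (rule tendsto_at_topI_sequentially)
  fix X :: "nat \<Rightarrow> real"
  assume X: "filterlim X at_top sequentially"
  have "(\<lambda>n. f (max (X n) 1)) \<longlonglongrightarrow> l"
    by (rule assms) (auto intro: filterlim_at_top_mono[OF X])
  moreover have "\<forall>\<^sub>F n in sequentially. f (max (X n) 1) = f (X n)"
    using filterlim_at_top[THEN iffD1, OF X, rule_format, of 1] by eventually_elim simp
  ultimately show "(\<lambda>n. f (X n)) \<longlonglongrightarrow> l"
    by (rule Lim_transform_eventually)
qed

lemma real_distribution_std_normal: "real_distribution std_normal"
  unfolding std_normal_def by (rule real_dist_normal_dist)

lemma std_normal_square: "integrable std_normal (\<lambda>x. x\<^sup>2)" "(\<integral>x. x\<^sup>2 \<partial>std_normal) = 1"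
  using std_normal_distribution_even_moments[of 1] by (simp_all add: std_normal_def)

lemma NB_std_order_stat_integral_tendsto:
  fixes F :: "real \<Rightarrow> real"
  assumes p: "0 < p" "p < 1" and r: "1 \<le> r" "r \<le> D"
    and F: "continuous_on UNIV F" "\<And>x. \<bar>F x\<bar> \<le> 1 + x\<^sup>2"
  shows "((\<lambda>a. \<integral>x. F x \<partial>order_stat_law D r (NB_std a p))
           \<longlongrightarrow> (\<integral>x. F x \<partial>order_stat_law D r std_normal)) at_top"
proof (rule tendsto_at_top_sequentially_pos)
  fix b :: "nat \<Rightarrow> real"
  assume b: "\<And>n. 0 < b n" "filterlim b at_top sequentially"
  have Q: "real_distribution (NB_std (b n) p)" for n
    using b p by (intro real_distribution_NB_std)
  have weak: "weak_conv_m (\<lambda>n. NB_std (b n) p) std_normal"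
    by (rule levy_continuity[OF Q real_distribution_std_normal])
       (rule filterlim_compose[OF char_NB_std_tendsto[OF p] b(2)])
  have square: "integrable (NB_std (b n) p) (\<lambda>x. x\<^sup>2)" "(\<integral>x. x\<^sup>2 \<partial>NB_std (b n) p) = 1" for n
    using integrable_NB_std_square integral_NB_std_square b(1) p by auto
  note one_plus_NB = prob_space.integral_one_plus[OF real_distribution.axioms(1)[OF Q] square(1)]
  note one_plus_normal = prob_space.integral_one_plus[OF
      real_distribution.axioms(1)[OF real_distribution_std_normal] std_normal_square(1)]
  show "(\<lambda>n. \<integral>x. F x \<partial>order_stat_law D r (NB_std (b n) p))
      \<longlonglongrightarrow> (\<integral>x. F x \<partial>order_stat_law D r std_normal)"
    by (rule order_stat_law_integral_tendsto[OF r Q real_distribution_std_normal weak F(1) _ F(2)])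
       (simp_all add: one_plus_NB one_plus_normal square std_normal_square continuous_intros)
qed

lemma NB_std_order_stat_moments_tendsto:
  assumes p: "0 < p" "p < 1" and r: "1 \<le> r" "r \<le> D"
  shows "((\<lambda>a. mean_of (order_stat_law D r (NB_std a p)))
           \<longlongrightarrow> mean_of (order_stat_law D r std_normal)) at_top"
    and "((\<lambda>a. var_of (order_stat_law D r (NB_std a p)))
           \<longlongrightarrow> var_of (order_stat_law D r std_normal)) at_top"
proof -
  have mean: "((\<lambda>a. mean_of (order_stat_law D r (NB_std a p)))
      \<longlongrightarrow> mean_of (order_stat_law D r std_normal)) at_top"
    unfolding mean_of_def using abs_le_one_plus_square
    by (intro NB_std_order_stat_integral_tendsto[OF p r]) (simp_all add: continuous_intros)
  have second: "((\<lambda>a. \<integral>x. x\<^sup>2 \<partial>order_stat_law D r (NB_std a p))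
      \<longlongrightarrow> (\<integral>x. x\<^sup>2 \<partial>order_stat_law D r std_normal)) at_top"
    by (intro NB_std_order_stat_integral_tendsto[OF p r]) (simp_all add: continuous_intros)
  have var_eq: "var_of (order_stat_law D r Q)
      = (\<integral>x. x\<^sup>2 \<partial>order_stat_law D r Q) - (mean_of (order_stat_law D r Q))\<^sup>2"
    if "real_distribution Q" "integrable Q (\<lambda>x. x\<^sup>2)" for Q
    by (intro real_distribution.var_of_eq real_distribution_order_stat_law[OF r that(1)]
        integrable_order_stat_law[OF r that]) simp_all
  have var_eventually: "\<forall>\<^sub>F a in at_top. var_of (order_stat_law D r (NB_std a p))
      = (\<integral>x. x\<^sup>2 \<partial>order_stat_law D r (NB_std a p)) - (mean_of (order_stat_law D r (NB_std a p)))\<^sup>2"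
    using eventually_gt_at_top[of 0]
    by eventually_elim (use p in \<open>simp add: var_eq real_distribution_NB_std integrable_NB_std_square\<close>)
  have "((\<lambda>a. (\<integral>x. x\<^sup>2 \<partial>order_stat_law D r (NB_std a p)) - (mean_of (order_stat_law D r (NB_std a p)))\<^sup>2)
      \<longlongrightarrow> var_of (order_stat_law D r std_normal)) at_top"
    using var_eq[OF real_distribution_std_normal std_normal_square(1)]
    by (simp add: tendsto_diff[OF second tendsto_power[OF mean]])
  then show "((\<lambda>a. var_of (order_stat_law D r (NB_std a p)))
      \<longlongrightarrow> var_of (order_stat_law D r std_normal)) at_top"
    using tendsto_cong[OF var_eventually] by simp
  show "((\<lambda>a. mean_of (order_stat_law D r (NB_std a p)))
      \<longlongrightarrow> mean_of (order_stat_law D r std_normal)) at_top"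
    by (rule mean)
qed

lemma dispersion_order_stat_NB:
  assumes a: "0 < a" and p: "0 < p" "p < 1" and r: "1 \<le> r" "r \<le> D"
  shows "dispersion (order_stat_law D r (NB a p))
    = var_of (order_stat_law D r (NB_std a p)) / p
        / (1 + mean_of (order_stat_law D r (NB_std a p)) / sqrt (a * (1 - p)))"
proof -
  let ?Z = "order_stat_law D r (NB_std a p)"
  define c where "c = sqrt (a * (1 - p))"
  have c: "0 < c" "nb_mean a p = c\<^sup>2 / p" "nb_sd a p = c / p"
    using a p by (simp_all add: c_def nb_mean_def nb_sd_def)
  have Z: "real_distribution ?Z"
    by (rule real_distribution_order_stat_law[OF r real_distribution_NB_std[OF a p]])
  have "integrable ?Z (\<lambda>x. x\<^sup>2)"
    by (rule integrable_order_stat_law[OF r real_distribution_NB_std[OF a p] integrable_NB_std_square[OF a p]])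
       simp_all
  then have Z_mean: "integrable ?Z (\<lambda>x. x)"
    by (rule real_distribution.integrable_of_square[OF Z])
  have law: "order_stat_law D r (NB a p) = distr ?Z borel (\<lambda>z. nb_mean a p + nb_sd a p * z)"
    unfolding NB_eq_distr_NB_std[OF a p]
    by (rule order_stat_law_affine[OF r real_distribution_NB_std[OF a p] nb_sd_pos[OF a p]])
  have "dispersion (order_stat_law D r (NB a p))
      = (nb_sd a p)\<^sup>2 * var_of ?Z / (nb_mean a p + nb_sd a p * mean_of ?Z)"
    unfolding law dispersion_def real_distribution.mean_of_affine[OF Z Z_mean]
      real_distribution.var_of_affine[OF Z Z_mean] ..
  also have "\<dots> = (c / p)\<^sup>2 * var_of ?Z / (c\<^sup>2 / p + c / p * mean_of ?Z)"
    by (simp only: c(2,3))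
  also have "\<dots> = var_of ?Z / p / (1 + mean_of ?Z / c)"
  proof -
    have denominator: "c\<^sup>2 / p + c / p * mean_of ?Z = c / p * (c + mean_of ?Z)"
      by (simp add: power2_eq_square algebra_simps)
    have ratio: "1 + mean_of ?Z / c = (c + mean_of ?Z) / c"
      using c(1) by (simp add: field_simps)
    (* also for d = 0, where both sides are 0 by the convention x / 0 = 0 *)
    have "(c / p)\<^sup>2 * v / (c / p * d) = v / p / (d / c)" for v d :: real
      using c(1) p(1) by (cases "d = 0") (simp_all add: field_simps power2_eq_square)
    then show ?thesis
      unfolding denominator ratio .
  qed
  finally show ?thesis
    by (simp add: c_def)
qed

theorem mainTheorem5:
  fixes D r :: nat and p :: real
  assumes "1 \<le> r" and "r \<le> D" and "0 < p" and "p < 1"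
  shows "((\<lambda>\<alpha>. dispersion (order_stat_law D r (NB \<alpha> p)))
           \<longlongrightarrow> var_of (order_stat_law D r std_normal) / p) at_top"
proof -
  let ?Z = "\<lambda>a. order_stat_law D r (NB_std a p)"
  note mean = NB_std_order_stat_moments_tendsto(1)[OF assms(3,4,1,2)]
  note var = NB_std_order_stat_moments_tendsto(2)[OF assms(3,4,1,2)]
  have "filterlim (\<lambda>a. sqrt (a * (1 - p))) at_top at_top"
    using assms(4) by real_asymp
  then have ratio: "((\<lambda>a. mean_of (?Z a) / sqrt (a * (1 - p))) \<longlongrightarrow> 0) at_top"
    by (intro tendsto_divide_0[OF mean] filterlim_at_top_imp_at_infinity)
  have "((\<lambda>a. var_of (?Z a) / p / (1 + mean_of (?Z a) / sqrt (a * (1 - p))))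
      \<longlongrightarrow> var_of (order_stat_law D r std_normal) / p / (1 + 0)) at_top"
    using assms(3) by (intro tendsto_intros var ratio) auto
  moreover have "\<forall>\<^sub>F a in at_top. var_of (?Z a) / p / (1 + mean_of (?Z a) / sqrt (a * (1 - p)))
      = dispersion (order_stat_law D r (NB a p))"
    using eventually_gt_at_top[of 0]
    by eventually_elim (use dispersion_order_stat_NB[OF _ assms(3,4,1,2)] in simp)
  ultimately show ?thesis
    by (simp add: Lim_transform_eventually)
qed

end
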